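(* Let $A,B$ be idempotent $\Gamma$-graded rings and ${}_AP_B$, ${}_BQ_A$ graded bimodules unital on both sides, such that there is a graded Morita context $(A,B,P,Q,\mu,\nu)$ with surjective trace maps. For every unital graded left $A$-module $U$, there is an isomorphism of graded left $B$-modules $B\cdot\mathrm{HOM}_A(P,U)\cong B\cdot\mathrm{HOM}_A(P,U/t_A(U))$.
   Context: $\Gamma$ is a fixed multiplicative group with identity $e$. Rings are associative $\Gamma$-graded, not necessarily unital; $A$ is idempotent if $A^2=A$; a module is unital if $AM=M$; $t_A(U)=\{u\in U: Au=0\}$. A left-linear $f$ is graded of degree $\sigma$ if $f(M_\tau)\subseteq N_{\tau\sigma}$; $\mathrm{HOM}$ is the direct sum over degrees; $\mathrm{HOM}_A(P,N)$ is a graded left $B$-module via $(bf)(p)=f(pb)$; $B\cdot H$ denotes finite sums $\sum b_ih_i$. A graded Morita context $(A,B,P,Q,\mu,\nu)$: idempotent graded rings $A,B$, graded bimodules ${}_AP_B$, ${}_BQ_A$ unital on both sides, degree-$e$ graded bimodule maps $\mu:P\otimes_BQ\to A$, $\langle p,q\rangle=\mu(p\otimes q)$, $\nu:Q\otimes_AP\to B$, $[q,p]=\nu(q\otimes p)$, with $p'[q,p]=\langle p',q\rangle p$ and $q'\langle p,q\rangle=[q',p]q$. *)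

theory Defs
  imports Main "HOL-Library.Function_Algebras"
begin

text \<open>The grading group Gamma is a type 'g of class group_add
(not necessarily commutative); its multiplication is written +, its identity e is 0.
Rings are types of class ring (associative, not necessarily unital).\<close>

definition fin_sums :: "'m::comm_monoid_add set \<Rightarrow> 'm set" where
  "fin_sums S = {x. \<exists>(n::nat) f. (\<forall>i<n. f i \<in> S) \<and> x = (\<Sum>i<n. f i)}"

definition graded_group :: "('g \<Rightarrow> 'm::ab_group_add set) \<Rightarrow> bool" where
  "graded_group G \<longleftrightarrow>
     (\<forall>g. 0 \<in> G g \<and> (\<forall>x\<in>G g. \<forall>y\<in>G g. x + y \<in> G g) \<and> (\<forall>x\<in>G g. - x \<in> G g)) \<and>
     (\<forall>m. \<exists>!c. finite {g. c g \<noteq> 0} \<and> (\<forall>g. c g \<in> G g) \<and> m = (\<Sum>g\<in>{g. c g \<noteq> 0}. c g))"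

definition graded_ring :: "('g::group_add \<Rightarrow> 'a::ring set) \<Rightarrow> bool" where
  "graded_ring G \<longleftrightarrow> graded_group G \<and>
     (\<forall>s t. \<forall>x\<in>G s. \<forall>y\<in>G t. x * y \<in> G (s + t))"

definition idempotent_ring :: "'a::ring itself \<Rightarrow> bool" where
  "idempotent_ring _ \<longleftrightarrow> fin_sums {x * y | x y :: 'a. True} = UNIV"

definition lmod :: "('a::ring \<Rightarrow> 'm::ab_group_add \<Rightarrow> 'm) \<Rightarrow> bool" where
  "lmod sm \<longleftrightarrow> (\<forall>a x y. sm a (x + y) = sm a x + sm a y) \<and>
     (\<forall>a b x. sm (a + b) x = sm a x + sm b x) \<and> (\<forall>a b x. sm (a * b) x = sm a (sm b x))"

definition rmod :: "('m::ab_group_add \<Rightarrow> 'b::ring \<Rightarrow> 'm) \<Rightarrow> bool" where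
  "rmod sm \<longleftrightarrow> (\<forall>b x y. sm (x + y) b = sm x b + sm y b) \<and>
     (\<forall>a b x. sm x (a + b) = sm x a + sm x b) \<and> (\<forall>a b x. sm x (a * b) = sm (sm x a) b)"

definition graded_lmod :: "('g::group_add \<Rightarrow> 'a::ring set) \<Rightarrow> ('g \<Rightarrow> 'm::ab_group_add set)
    \<Rightarrow> ('a \<Rightarrow> 'm \<Rightarrow> 'm) \<Rightarrow> bool" where
  "graded_lmod GA GM sm \<longleftrightarrow> lmod sm \<and> graded_group GM \<and>
     (\<forall>s t. \<forall>a\<in>GA s. \<forall>m\<in>GM t. sm a m \<in> GM (s + t))"

definition graded_rmod :: "('g::group_add \<Rightarrow> 'b::ring set) \<Rightarrow> ('g \<Rightarrow> 'm::ab_group_add set)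
    \<Rightarrow> ('m \<Rightarrow> 'b \<Rightarrow> 'm) \<Rightarrow> bool" where
  "graded_rmod GB GM sm \<longleftrightarrow> rmod sm \<and> graded_group GM \<and>
     (\<forall>s t. \<forall>m\<in>GM t. \<forall>b\<in>GB s. sm m b \<in> GM (t + s))"

definition unital_lmod :: "('a::ring \<Rightarrow> 'm::ab_group_add \<Rightarrow> 'm) \<Rightarrow> bool" where
  "unital_lmod sm \<longleftrightarrow> fin_sums {sm a m | a m. True} = UNIV"

definition unital_rmod :: "('m::ab_group_add \<Rightarrow> 'b::ring \<Rightarrow> 'm) \<Rightarrow> bool" where
  "unital_rmod sm \<longleftrightarrow> fin_sums {sm m b | m b. True} = UNIV"

definition unital_graded_bimod :: "('g::group_add \<Rightarrow> 'a::ring set) \<Rightarrow> ('g \<Rightarrow> 'b::ring set)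
    \<Rightarrow> ('g \<Rightarrow> 'm::ab_group_add set) \<Rightarrow> ('a \<Rightarrow> 'm \<Rightarrow> 'm) \<Rightarrow> ('m \<Rightarrow> 'b \<Rightarrow> 'm) \<Rightarrow> bool" where
  "unital_graded_bimod GA GB GM sl sr \<longleftrightarrow> graded_lmod GA GM sl \<and> graded_rmod GB GM sr \<and>
     (\<forall>a m b. sr (sl a m) b = sl a (sr m b)) \<and> unital_lmod sl \<and> unital_rmod sr"

text \<open>The bimodule maps
mu : P \<otimes>_B Q \<rightarrow> A and nu : Q \<otimes>_A P \<rightarrow> B of degree e are given, via the universal
property of the tensor product, as balanced biadditive pairings
mu p q = <p,q> and nu q p = [q,p].\<close>
definition graded_morita_context ::
  "('g::group_add \<Rightarrow> 'a::ring set) \<Rightarrow> ('g \<Rightarrow> 'b::ring set)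
   \<Rightarrow> ('g \<Rightarrow> 'p::ab_group_add set) \<Rightarrow> ('g \<Rightarrow> 'q::ab_group_add set)
   \<Rightarrow> ('a \<Rightarrow> 'p \<Rightarrow> 'p) \<Rightarrow> ('p \<Rightarrow> 'b \<Rightarrow> 'p) \<Rightarrow> ('b \<Rightarrow> 'q \<Rightarrow> 'q) \<Rightarrow> ('q \<Rightarrow> 'a \<Rightarrow> 'q)
   \<Rightarrow> ('p \<Rightarrow> 'q \<Rightarrow> 'a) \<Rightarrow> ('q \<Rightarrow> 'p \<Rightarrow> 'b) \<Rightarrow> bool" where
  "graded_morita_context GA GB GP GQ laP raP lbQ raQ mu nu \<longleftrightarrow>
     graded_ring GA \<and> graded_ring GB \<and> idempotent_ring TYPE('a) \<and> idempotent_ring TYPE('b) \<and>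
     unital_graded_bimod GA GB GP laP raP \<and> unital_graded_bimod GB GA GQ lbQ raQ \<and>
     (\<forall>p p' q. mu (p + p') q = mu p q + mu p' q) \<and> (\<forall>p q q'. mu p (q + q') = mu p q + mu p q') \<and>
     (\<forall>p b q. mu (raP p b) q = mu p (lbQ b q)) \<and>
     (\<forall>a p q. mu (laP a p) q = a * mu p q) \<and> (\<forall>p q a. mu p (raQ q a) = mu p q * a) \<and>
     (\<forall>s t. \<forall>p\<in>GP s. \<forall>q\<in>GQ t. mu p q \<in> GA (s + t)) \<and>
     (\<forall>q q' p. nu (q + q') p = nu q p + nu q' p) \<and> (\<forall>q p p'. nu q (p + p') = nu q p + nu q p') \<and>
     (\<forall>q a p. nu (raQ q a) p = nu q (laP a p)) \<and>
     (\<forall>b q p. nu (lbQ b q) p = b * nu q p) \<and> (\<forall>q p b. nu q (raP p b) = nu q p * b) \<and>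
     (\<forall>s t. \<forall>q\<in>GQ s. \<forall>p\<in>GP t. nu q p \<in> GB (s + t)) \<and>
     (\<forall>p' q p. raP p' (nu q p) = laP (mu p' q) p) \<and>
     (\<forall>q' p q. raQ q' (mu p q) = lbQ (nu q' p) q)"

definition torsion :: "('a \<Rightarrow> 'm::zero \<Rightarrow> 'm) \<Rightarrow> 'm set" where
  "torsion sm = {u. \<forall>a. sm a u = 0}"

definition graded_hom_deg :: "('g::group_add \<Rightarrow> 'm::ab_group_add set) \<Rightarrow> ('g \<Rightarrow> 'n::ab_group_add set)
    \<Rightarrow> ('a \<Rightarrow> 'm \<Rightarrow> 'm) \<Rightarrow> ('a \<Rightarrow> 'n \<Rightarrow> 'n) \<Rightarrow> 'g \<Rightarrow> ('m \<Rightarrow> 'n) \<Rightarrow> bool" where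
  "graded_hom_deg GM GN sM sN s f \<longleftrightarrow> (\<forall>x y. f (x + y) = f x + f y) \<and>
     (\<forall>a x. f (sM a x) = sN a (f x)) \<and> (\<forall>t. \<forall>x\<in>GM t. f x \<in> GN (t + s))"

definition HOMs :: "('g::group_add \<Rightarrow> 'm::ab_group_add set) \<Rightarrow> ('g \<Rightarrow> 'n::ab_group_add set)
    \<Rightarrow> ('a \<Rightarrow> 'm \<Rightarrow> 'm) \<Rightarrow> ('a \<Rightarrow> 'n \<Rightarrow> 'n) \<Rightarrow> 'g \<Rightarrow> ('m \<Rightarrow> 'n) set" where
  "HOMs GM GN sM sN s = {f. graded_hom_deg GM GN sM sN s f}"

definition HOM :: "('g::group_add \<Rightarrow> 'm::ab_group_add set) \<Rightarrow> ('g \<Rightarrow> 'n::ab_group_add set)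
    \<Rightarrow> ('a \<Rightarrow> 'm \<Rightarrow> 'm) \<Rightarrow> ('a \<Rightarrow> 'n \<Rightarrow> 'n) \<Rightarrow> ('m \<Rightarrow> 'n) set" where
  "HOM GM GN sM sN = fin_sums (\<Union>s. HOMs GM GN sM sN s)"

definition hom_bact :: "('p \<Rightarrow> 'b \<Rightarrow> 'p) \<Rightarrow> 'b \<Rightarrow> ('p \<Rightarrow> 'n) \<Rightarrow> ('p \<Rightarrow> 'n)" where
  "hom_bact raP b f = (\<lambda>p. f (raP p b))"

definition B_dot :: "('p \<Rightarrow> 'b \<Rightarrow> 'p) \<Rightarrow> ('p \<Rightarrow> 'n::ab_group_add) set \<Rightarrow> ('p \<Rightarrow> 'n) set" where
  "B_dot raP H = fin_sums {hom_bact raP b h | b h. h \<in> H}"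

definition graded_B_iso :: "('g::group_add \<Rightarrow> 'p::ab_group_add set) \<Rightarrow> ('a \<Rightarrow> 'p \<Rightarrow> 'p) \<Rightarrow> ('p \<Rightarrow> 'b \<Rightarrow> 'p)
    \<Rightarrow> ('g \<Rightarrow> 'n1::ab_group_add set) \<Rightarrow> ('a \<Rightarrow> 'n1 \<Rightarrow> 'n1)
    \<Rightarrow> ('g \<Rightarrow> 'n2::ab_group_add set) \<Rightarrow> ('a \<Rightarrow> 'n2 \<Rightarrow> 'n2)
    \<Rightarrow> (('p \<Rightarrow> 'n1) \<Rightarrow> ('p \<Rightarrow> 'n2)) \<Rightarrow> bool" where
  "graded_B_iso GP laP raP G1 s1 G2 s2 \<phi> \<longleftrightarrow>
     (let D1 = B_dot raP (HOM GP G1 laP s1); D2 = B_dot raP (HOM GP G2 laP s2) in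
       bij_betw \<phi> D1 D2 \<and>
       (\<forall>f\<in>D1. \<forall>g\<in>D1. \<phi> (f + g) = \<phi> f + \<phi> g) \<and>
       (\<forall>b. \<forall>f\<in>D1. \<phi> (hom_bact raP b f) = hom_bact raP b (\<phi> f)) \<and>
       (\<forall>s. \<forall>f\<in>D1. f \<in> HOMs GP G1 laP s1 s \<longleftrightarrow> \<phi> f \<in> HOMs GP G2 laP s2 s))"

end

theory Submission
  imports Defs HOL.Modules
begin

(* The isomorphism is composition with the quotient map pi : U -> U/t_A(U).
   Every element of B.HOM_A(P,U) is A-linear, and an A-linear map from the unital module P
   into t_A(U) vanishes; this gives injectivity. Applied to the homogeneous generators a y of P
   (a in A_alpha, y in P_beta), the same observation shows that f is homogeneous whenever
   pi o f is: f(y) differs from its homogeneous component of the right degree by a torsion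
   element, which a kills.
   For surjectivity, B is additively generated by the [q,p] with p homogeneous. Lifting k(p)
   to a homogeneous u in U, the map x |-> <x,q> u lies in B.HOM_A(P,U) because Q is unital,
   and pi sends it to [q,p] k because x [q,p] = <x,q> p. *)

lemma fin_sums_conv_sum_list: "fin_sums S = {sum_list xs | xs. set xs \<subseteq> S}"
proof (intro set_eqI iffI)
  fix x assume "x \<in> fin_sums S"
  then obtain n f where "\<forall>i<n. f i \<in> S" "x = (\<Sum>i<(n::nat). f i)"
    unfolding fin_sums_def by blast
  then have "set (map f [0..<n]) \<subseteq> S" "x = sum_list (map f [0..<n])"
    by (auto simp: interv_sum_list_conv_sum_set_nat atLeast0LessThan)
  then show "x \<in> {sum_list xs | xs. set xs \<subseteq> S}" by blast
next
  fix x assume "x \<in> {sum_list xs | xs. set xs \<subseteq> S}"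
  then obtain xs where "set xs \<subseteq> S" "x = sum_list xs" by blast
  then have "\<forall>i<length xs. xs ! i \<in> S" "x = (\<Sum>i<length xs. xs ! i)"
    by (auto simp: sum_list_sum_nth atLeast0LessThan)
  then show "x \<in> fin_sums S" unfolding fin_sums_def by blast
qed

lemma fin_sums_zero [simp, intro]: "0 \<in> fin_sums S"
  unfolding fin_sums_conv_sum_list by (auto intro: exI[of _ "[]"])

lemma fin_sums_generator [intro]: "x \<in> S \<Longrightarrow> x \<in> fin_sums S"
  unfolding fin_sums_conv_sum_list by (auto intro!: exI[of _ "[x]"])

lemma fin_sums_add [intro]:
  assumes "x \<in> fin_sums S" "y \<in> fin_sums S" shows "x + y \<in> fin_sums S"
proof -
  obtain xs ys where "set xs \<subseteq> S" "x = sum_list xs" "set ys \<subseteq> S" "y = sum_list ys"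
    using assms unfolding fin_sums_conv_sum_list by blast
  then have "set (xs @ ys) \<subseteq> S" "x + y = sum_list (xs @ ys)" by auto
  then show ?thesis unfolding fin_sums_conv_sum_list by blast
qed

lemma fin_sums_induct [consumes 1, case_names zero add generator]:
  assumes "x \<in> fin_sums S" and "P 0" and "\<And>y z. P y \<Longrightarrow> P z \<Longrightarrow> P (y + z)"
    and "\<And>s. s \<in> S \<Longrightarrow> P s"
  shows "P x"
proof -
  obtain xs where "set xs \<subseteq> S" "x = sum_list xs"
    using assms(1) unfolding fin_sums_conv_sum_list by blast
  then show ?thesis by (induction xs arbitrary: x) (auto intro: assms(2-4))
qed

lemma sum_in_fin_sums: "(\<And>i. i \<in> I \<Longrightarrow> f i \<in> fin_sums S) \<Longrightarrow> sum f I \<in> fin_sums S"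
  by (induction I rule: infinite_finite_induct) auto

lemma fin_sums_subset_fin_sums: "S \<subseteq> fin_sums T \<Longrightarrow> fin_sums S \<subseteq> fin_sums T"
  by (auto elim: fin_sums_induct)

lemma additive_fin_sums_into:
  assumes "additive f" "x \<in> fin_sums S" "\<And>s. s \<in> S \<Longrightarrow> f s \<in> fin_sums T"
  shows "f x \<in> fin_sums T"
  using assms(2) by (induction rule: fin_sums_induct)
    (auto simp: additive.zero[OF assms(1)] additive.add[OF assms(1)] assms(3))

lemma additive_image_fin_sums:
  assumes "additive f" shows "f ` fin_sums S = fin_sums (f ` S)"
proof
  show "f ` fin_sums S \<subseteq> fin_sums (f ` S)"
    using additive_fin_sums_into[OF assms] by blast
  show "fin_sums (f ` S) \<subseteq> f ` fin_sums S"
  proof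
    fix y assume "y \<in> fin_sums (f ` S)"
    then show "y \<in> f ` fin_sums S"
    proof (induction rule: fin_sums_induct)
      case zero
      have "f 0 = 0" by (rule additive.zero[OF assms])
      then show ?case by (metis fin_sums_zero image_eqI)
    next
      case (add y z)
      then obtain y' z' where "y' \<in> fin_sums S" "z' \<in> fin_sums S" "y = f y'" "z = f z'" by blast
      moreover have "f (y' + z') = f y' + f z'" by (rule additive.add[OF assms])
      ultimately show ?case by (metis fin_sums_add image_eqI)
    qed auto
  qed
qed

definition homog_comp :: "('g \<Rightarrow> 'm::ab_group_add set) \<Rightarrow> 'm \<Rightarrow> 'g \<Rightarrow> 'm" where
  "homog_comp G m = (THE c. finite {g. c g \<noteq> 0} \<and> (\<forall>g. c g \<in> G g) \<and> m = (\<Sum>g\<in>{g. c g \<noteq> 0}. c g))"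

lemma graded_groupD:
  assumes "graded_group G"
  shows graded_group_zero: "0 \<in> G g"
    and graded_group_add: "x \<in> G g \<Longrightarrow> y \<in> G g \<Longrightarrow> x + y \<in> G g"
    and graded_group_decomp:
      "\<exists>!c. finite {g. c g \<noteq> 0} \<and> (\<forall>g. c g \<in> G g) \<and> m = (\<Sum>g\<in>{g. c g \<noteq> 0}. c g)"
  using assms unfolding graded_group_def by blast+

lemma
  assumes "graded_group G"
  shows finite_homog_comp_support: "finite {g. homog_comp G m g \<noteq> 0}"
    and homog_comp_mem: "homog_comp G m g \<in> G g"
    and sum_homog_comp: "(\<Sum>g\<in>{g. homog_comp G m g \<noteq> 0}. homog_comp G m g) = m"
  using theI'[OF graded_group_decomp[OF assms, of m]] unfolding homog_comp_def by auto

lemma homog_comp_unique: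
  assumes "graded_group G" "finite S" "\<And>g. c g \<in> G g" "\<And>g. g \<notin> S \<Longrightarrow> c g = 0"
    and "m = (\<Sum>g\<in>S. c g)"
  shows "homog_comp G m = c"
  unfolding homog_comp_def
proof (rule the1_equality[OF graded_group_decomp[OF assms(1)]])
  have "{g. c g \<noteq> 0} \<subseteq> S" using assms(4) by blast
  moreover from this have "(\<Sum>g\<in>S. c g) = (\<Sum>g\<in>{g. c g \<noteq> 0}. c g)"
    by (intro sum.mono_neutral_right) (use assms(2) in auto)
  ultimately show "finite {g. c g \<noteq> 0} \<and> (\<forall>g. c g \<in> G g) \<and> m = (\<Sum>g\<in>{g. c g \<noteq> 0}. c g)"
    using assms(2,3,5) finite_subset by auto
qed

lemma homog_comp_homogeneous:
  assumes "graded_group G" "m \<in> G h"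
  shows "homog_comp G m g = (if g = h then m else 0)"
  using homog_comp_unique[where S="{h}" and c="\<lambda>g. if g = h then m else 0"]
  by (simp add: assms graded_group_zero)

lemma sum_homog_comp_superset:
  assumes "graded_group G" "finite S" "{g. homog_comp G m g \<noteq> 0} \<subseteq> S"
  shows "(\<Sum>g\<in>S. homog_comp G m g) = m"
proof -
  have "(\<Sum>g\<in>S. homog_comp G m g) = (\<Sum>g\<in>{g. homog_comp G m g \<noteq> 0}. homog_comp G m g)"
    by (rule sum.mono_neutral_right[OF assms(2,3)]) blast
  then show ?thesis using sum_homog_comp[OF assms(1)] by simp
qed

lemma homog_comp_map:
  assumes GU: "graded_group GU" and GV: "graded_group GV" and "additive \<pi>"
    and deg: "\<And>t x. x \<in> GU t \<Longrightarrow> \<pi> x \<in> GV t"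
  shows "homog_comp GV (\<pi> u) = (\<lambda>g. \<pi> (homog_comp GU u g))"
proof (rule homog_comp_unique[OF GV finite_homog_comp_support[OF GU, of u]])
  show "\<pi> (homog_comp GU u g) \<in> GV g" for g by (intro deg homog_comp_mem[OF GU])
  show "\<pi> (homog_comp GU u g) = 0" if "g \<notin> {g. homog_comp GU u g \<noteq> 0}" for g
    using that additive.zero[OF \<open>additive \<pi>\<close>] by simp
  show "\<pi> u = (\<Sum>g\<in>{g. homog_comp GU u g \<noteq> 0}. \<pi> (homog_comp GU u g))"
    using additive.sum[OF \<open>additive \<pi>\<close>] sum_homog_comp[OF GU] by metis
qed

lemma additive_homog_comp:
  assumes "graded_group G" shows "additive (\<lambda>m. homog_comp G m g)"
proof
  fix x y
  let ?S = "{g. homog_comp G x g \<noteq> 0} \<union> {g. homog_comp G y g \<noteq> 0}"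
  have S: "finite ?S" using finite_homog_comp_support[OF assms] by blast
  have "x + y = (\<Sum>g\<in>?S. homog_comp G x g + homog_comp G y g)"
    by (simp add: sum.distrib sum_homog_comp_superset[OF assms S])
  then have "homog_comp G (x + y) = (\<lambda>g. homog_comp G x g + homog_comp G y g)"
    by (intro homog_comp_unique[OF assms S])
      (auto intro: graded_group_add[OF assms] homog_comp_mem[OF assms])
  then show "homog_comp G (x + y) g = homog_comp G x g + homog_comp G y g" by simp
qed

lemma graded_group_fin_sums_homogeneous:
  assumes "graded_group G" shows "m \<in> fin_sums (\<Union>g. G g)"
  using sum_in_fin_sums[of _ "\<lambda>g. homog_comp G m g"] homog_comp_mem[OF assms]
    sum_homog_comp[OF assms, of m] by (metis UN_I UNIV_I fin_sums_generator)

lemma degree0_map_homog_comp: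
  assumes "graded_group GU" "graded_group GV" "additive \<pi>" "\<And>t x. x \<in> GU t \<Longrightarrow> \<pi> x \<in> GV t"
    and "\<pi> x \<in> GV t"
  shows "\<pi> (homog_comp GU x t) = \<pi> x"
  using homog_comp_map[OF assms(1-4), of x] homog_comp_homogeneous[OF assms(2,5)] by metis

definition lmod_hom :: "('a \<Rightarrow> 'm::ab_group_add \<Rightarrow> 'm) \<Rightarrow> ('a \<Rightarrow> 'n::ab_group_add \<Rightarrow> 'n) \<Rightarrow> ('m \<Rightarrow> 'n) \<Rightarrow> bool"
  where "lmod_hom sM sN f \<longleftrightarrow> additive f \<and> (\<forall>a x. f (sM a x) = sN a (f x))"

lemma graded_hom_deg_iff_lmod_hom:
  "graded_hom_deg GM GN sM sN s f \<longleftrightarrow> lmod_hom sM sN f \<and> (\<forall>t. \<forall>x\<in>GM t. f x \<in> GN (t + s))"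
  unfolding graded_hom_deg_def lmod_hom_def additive_def by blast

lemma lmod_additive: "lmod sm \<Longrightarrow> additive (sm a)"
  unfolding lmod_def additive_def by blast

lemma lmod_hom_zero: "lmod sN \<Longrightarrow> lmod_hom sM sN 0"
  unfolding lmod_hom_def additive_def by (simp add: additive.zero[OF lmod_additive])

lemma lmod_hom_add:
  "lmod sN \<Longrightarrow> lmod_hom sM sN f \<Longrightarrow> lmod_hom sM sN g \<Longrightarrow> lmod_hom sM sN (f + g)"
  unfolding lmod_hom_def additive_def by (simp add: additive.add[OF lmod_additive] algebra_simps)

lemma lmod_hom_diff:
  "lmod sN \<Longrightarrow> lmod_hom sM sN f \<Longrightarrow> lmod_hom sM sN g \<Longrightarrow> lmod_hom sM sN (f - g)"
  unfolding lmod_hom_def additive_def by (simp add: additive.diff[OF lmod_additive] algebra_simps)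

lemma lmod_hom_fin_sums:
  assumes "lmod sN" "f \<in> fin_sums S" "\<And>h. h \<in> S \<Longrightarrow> lmod_hom sM sN h"
  shows "lmod_hom sM sN f"
  using assms(2)
proof (induction rule: fin_sums_induct)
  case zero show ?case by (rule lmod_hom_zero[OF assms(1)])
next
  case (add y z) then show ?case by (rule lmod_hom_add[OF assms(1)])
qed (rule assms(3))

lemma lmod_hom_HOM: "lmod sN \<Longrightarrow> f \<in> HOM GM GN sM sN \<Longrightarrow> lmod_hom sM sN f"
  unfolding HOM_def HOMs_def by (erule lmod_hom_fin_sums) (auto simp: graded_hom_deg_iff_lmod_hom)

lemma lmod_hom_hom_bact:
  assumes "rmod raP" "\<And>a m b. raP (laP a m) b = laP a (raP m b)" "lmod_hom laP sN h"
  shows "lmod_hom laP sN (hom_bact raP b h)"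
  using assms unfolding lmod_hom_def additive_def hom_bact_def rmod_def by simp

lemma lmod_hom_B_dot:
  assumes "lmod sN" "rmod raP" "\<And>a m b. raP (laP a m) b = laP a (raP m b)"
    and "f \<in> B_dot raP (HOM GP GN laP sN)"
  shows "lmod_hom laP sN f"
  using assms(1) assms(4)[unfolded B_dot_def]
  by (rule lmod_hom_fin_sums) (auto intro: lmod_hom_hom_bact[OF assms(2,3)] lmod_hom_HOM[OF assms(1)])

lemma lmod_hom_into_torsion_eq_0:
  assumes "lmod_hom sM sN h" "unital_lmod sM" "\<And>x. h x \<in> torsion sN"
  shows "h = 0"
proof
  fix x
  have "x \<in> fin_sums {sM a m | a m. True}" using assms(2) unfolding unital_lmod_def by simp
  then show "h x = 0 x"
  proof (induction rule: fin_sums_induct)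
    case zero show ?case using assms(1) unfolding lmod_hom_def by (simp add: additive.zero)
  next
    case (add y z) then show ?case using assms(1) unfolding lmod_hom_def by (simp add: additive.add)
  next
    case (generator s)
    then obtain a m where "s = sM a m" by blast
    then show ?case using assms(1,3) unfolding lmod_hom_def torsion_def by simp
  qed
qed

lemma lmod_hom_eq_if_comp_eq:
  assumes "lmod sU" "unital_lmod sM" "additive \<pi>" "\<And>u. \<pi> u = 0 \<Longrightarrow> u \<in> torsion sU"
    and "lmod_hom sM sU f" "lmod_hom sM sU g" "\<pi> \<circ> f = \<pi> \<circ> g"
  shows "f = g"
proof -
  have "\<pi> (f x - g x) = 0" for x
    using additive.diff[OF assms(3)] assms(7) by (simp add: fun_eq_iff)
  then have "f - g = 0"
    by (intro lmod_hom_into_torsion_eq_0[OF lmod_hom_diff[OF assms(1,5,6)] assms(2)]) (simp add: assms(4))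
  then show ?thesis by simp
qed

lemma unital_graded_lmod_homogeneous_generators:
  assumes GA: "graded_group GA" and M: "graded_lmod GA GM sM" "unital_lmod sM" and "x \<in> GM t"
  shows "x \<in> fin_sums {sM a y | a y \<alpha> \<beta>. a \<in> GA \<alpha> \<and> y \<in> GM \<beta> \<and> \<alpha> + \<beta> = t}" (is "_ \<in> fin_sums ?S")
proof -
  have GM: "graded_group GM" and sM: "lmod sM"
    and deg: "\<And>a y \<alpha> \<beta>. a \<in> GA \<alpha> \<Longrightarrow> y \<in> GM \<beta> \<Longrightarrow> sM a y \<in> GM (\<alpha> + \<beta>)"
    using M(1) unfolding graded_lmod_def by blast+
  have add_left: "additive (\<lambda>a. sM a y)" for y using sM unfolding lmod_def additive_def by blast
  note comp_t = additive_homog_comp[OF GM, of t]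
  have comp_homog: "homog_comp GM (sM a y) t \<in> fin_sums ?S" if "a \<in> GA \<alpha>" "y \<in> GM \<beta>" for a y \<alpha> \<beta>
  proof -
    have "\<alpha> + \<beta> = t \<Longrightarrow> sM a y \<in> ?S" using that by blast
    then show ?thesis using homog_comp_homogeneous[OF GM deg[OF that]] by auto
  qed
  have comp_additive_right: "additive (\<lambda>y. homog_comp GM (sM a y) t)" for a
    using additive.add[OF comp_t] additive.add[OF lmod_additive[OF sM]] by (simp add: additive_def)
  have comp_additive_left: "additive (\<lambda>a. homog_comp GM (sM a y) t)" for y
    using additive.add[OF comp_t] additive.add[OF add_left] by (simp add: additive_def)
  have comp_gen: "homog_comp GM (sM a y) t \<in> fin_sums ?S" for a y
  proof (rule additive_fin_sums_into[where f="\<lambda>a. homog_comp GM (sM a y) t", OF comp_additive_left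
        graded_group_fin_sums_homogeneous[OF GA]])
    fix a' assume "a' \<in> (\<Union>\<alpha>. GA \<alpha>)"
    then obtain \<alpha> where a': "a' \<in> GA \<alpha>" by blast
    show "homog_comp GM (sM a' y) t \<in> fin_sums ?S"
      by (rule additive_fin_sums_into[where f="\<lambda>y. homog_comp GM (sM a' y) t", OF comp_additive_right
            graded_group_fin_sums_homogeneous[OF GM]]) (use comp_homog[OF a'] in blast)
  qed
  have "x \<in> fin_sums {sM a y | a y. True}" using M(2) unfolding unital_lmod_def by simp
  then have "homog_comp GM x t \<in> fin_sums ?S"
    by (rule additive_fin_sums_into[where f="\<lambda>x. homog_comp GM x t", OF comp_t]) (use comp_gen in blast)
  then show ?thesis using homog_comp_homogeneous[OF GM \<open>x \<in> GM t\<close>] by simp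
qed

lemma graded_surj_lift:
  assumes "graded_group GU" "graded_group GV" "additive \<pi>" "\<And>t x. x \<in> GU t \<Longrightarrow> \<pi> x \<in> GV t"
    and "surj \<pi>" "v \<in> GV t"
  obtains u where "u \<in> GU t" "\<pi> u = v"
proof -
  obtain u where "\<pi> u = v" using \<open>surj \<pi>\<close> by (metis surjD)
  then show ?thesis
    using that[OF homog_comp_mem[OF assms(1)]] degree0_map_homog_comp[OF assms(1-4)] assms(6) by metis
qed

lemma graded_hom_deg_if_comp:
  assumes GA: "graded_group GA" and M: "graded_lmod GA GM sM" "unital_lmod sM"
    and U: "graded_lmod GA GU sU" and GV: "graded_group GV"
    and \<pi>: "graded_hom_deg GU GV sU sV 0 \<pi>" and ker: "\<And>u. \<pi> u = 0 \<Longrightarrow> u \<in> torsion sU"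
    and f: "lmod_hom sM sU f" and \<pi>f: "graded_hom_deg GM GV sM sV s (\<pi> \<circ> f)"
  shows "graded_hom_deg GM GU sM sU s f"
proof -
  have GU: "graded_group GU" and sU: "lmod sU"
    and sU_deg: "\<And>a u \<alpha> \<beta>. a \<in> GA \<alpha> \<Longrightarrow> u \<in> GU \<beta> \<Longrightarrow> sU a u \<in> GU (\<alpha> + \<beta>)"
    using U unfolding graded_lmod_def by blast+
  have \<pi>_add: "additive \<pi>" and \<pi>_deg: "\<And>t u. u \<in> GU t \<Longrightarrow> \<pi> u \<in> GV t"
    using \<pi> unfolding graded_hom_deg_iff_lmod_hom lmod_hom_def by auto
  have f_add: "additive f" and f_lin: "\<And>a x. f (sM a x) = sU a (f x)"
    using f unfolding lmod_hom_def by auto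
  have "f x \<in> GU (t + s)" if "x \<in> GM t" for x t
    using unital_graded_lmod_homogeneous_generators[OF GA M that]
  proof (induction rule: fin_sums_induct)
    case zero show ?case using additive.zero[OF f_add] graded_group_zero[OF GU] by simp
  next
    case (add y z) then show ?case using additive.add[OF f_add] graded_group_add[OF GU] by simp
  next
    case (generator w)
    then obtain a y \<alpha> \<beta> where w: "w = sM a y" and a: "a \<in> GA \<alpha>" and y: "y \<in> GM \<beta>"
      and t: "\<alpha> + \<beta> = t" by blast
    define c where "c = homog_comp GU (f y) (\<beta> + s)"
    have "\<pi> (f y) \<in> GV (\<beta> + s)" using \<pi>f y unfolding graded_hom_deg_def by simp
    then have "\<pi> c = \<pi> (f y)" unfolding c_def using degree0_map_homog_comp[OF GU GV \<pi>_add \<pi>_deg] by blast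
    then have "f y - c \<in> torsion sU" by (intro ker) (simp add: additive.diff[OF \<pi>_add])
    then have "sU a (f y) = sU a c" by (simp add: torsion_def additive.diff[OF lmod_additive[OF sU]])
    moreover have "sU a c \<in> GU (\<alpha> + (\<beta> + s))"
      unfolding c_def by (rule sU_deg[OF a homog_comp_mem[OF GU]])
    ultimately show ?case by (simp add: w f_lin t[symmetric] add.assoc)
  qed
  then show ?thesis using f unfolding graded_hom_deg_iff_lmod_hom by blast
qed

lemma additive_comp_left: "additive \<pi> \<Longrightarrow> additive ((\<circ>) \<pi>)"
  by (simp add: additive_def fun_eq_iff additive.add)

lemma additive_hom_bact: "additive (hom_bact raP b)"
  by (simp add: additive_def hom_bact_def fun_eq_iff)

lemma additive_hom_bact_scalar: "rmod raP \<Longrightarrow> additive k \<Longrightarrow> additive (\<lambda>b. hom_bact raP b k)"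
  by (simp add: additive_def hom_bact_def fun_eq_iff rmod_def additive.add)

lemma comp_HOMs:
  assumes "graded_hom_deg GU GV sU sV 0 \<pi>" "k \<in> HOMs GP GU laP sU s"
  shows "\<pi> \<circ> k \<in> HOMs GP GV laP sV s"
  using assms unfolding HOMs_def graded_hom_deg_def by simp

lemma comp_B_dot_HOM_subset:
  assumes \<pi>: "graded_hom_deg GU GV sU sV 0 \<pi>"
  shows "(\<circ>) \<pi> ` B_dot raP (HOM GP GU laP sU) \<subseteq> B_dot raP (HOM GP GV laP sV)"
proof -
  have \<pi>_add: "additive ((\<circ>) \<pi>)"
    using \<pi> by (intro additive_comp_left) (simp add: graded_hom_deg_iff_lmod_hom lmod_hom_def)
  have "(\<circ>) \<pi> ` HOM GP GU laP sU \<subseteq> HOM GP GV laP sV"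
    unfolding HOM_def additive_image_fin_sums[OF \<pi>_add]
    by (rule fin_sums_subset_fin_sums) (use comp_HOMs[OF \<pi>] in blast)
  moreover have "\<pi> \<circ> hom_bact raP b h = hom_bact raP b (\<pi> \<circ> h)" for b h
    by (simp add: hom_bact_def comp_def)
  ultimately have "\<pi> \<circ> hom_bact raP b h \<in> fin_sums {hom_bact raP b h | b h. h \<in> HOM GP GV laP sV}"
    if "h \<in> HOM GP GU laP sU" for b h
    using that by (intro fin_sums_generator) blast
  then show ?thesis
    unfolding B_dot_def additive_image_fin_sums[OF \<pi>_add]
    by (intro fin_sums_subset_fin_sums) blast
qed

locale graded_morita =
  fixes GA :: "'g::group_add \<Rightarrow> 'a::ring set" and GB :: "'g \<Rightarrow> 'b::ring set"
    and GP :: "'g \<Rightarrow> 'p::ab_group_add set" and GQ :: "'g \<Rightarrow> 'q::ab_group_add set"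
    and laP :: "'a \<Rightarrow> 'p \<Rightarrow> 'p" and raP :: "'p \<Rightarrow> 'b \<Rightarrow> 'p"
    and lbQ :: "'b \<Rightarrow> 'q \<Rightarrow> 'q" and raQ :: "'q \<Rightarrow> 'a \<Rightarrow> 'q"
    and mu :: "'p \<Rightarrow> 'q \<Rightarrow> 'a" and nu :: "'q \<Rightarrow> 'p \<Rightarrow> 'b"
  assumes morita: "graded_morita_context GA GB GP GQ laP raP lbQ raQ mu nu"
begin

lemma
  shows GA_graded: "graded_group GA"
    and GQ_graded: "graded_group GQ"
    and P_graded_lmod: "graded_lmod GA GP laP"
    and P_unital: "unital_lmod laP"
    and P_rmod: "rmod raP"
    and raP_laP: "raP (laP a m) b = laP a (raP m b)"
    and Q_unital: "unital_lmod lbQ"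
    and mu_add_left: "mu (p + p') q = mu p q + mu p' q"
    and mu_add_right: "mu p (q + q') = mu p q + mu p q'"
    and mu_raP: "mu (raP p b) q = mu p (lbQ b q)"
    and mu_laP: "mu (laP a p) q = a * mu p q"
    and mu_degree: "p \<in> GP s \<Longrightarrow> q \<in> GQ t \<Longrightarrow> mu p q \<in> GA (s + t)"
    and nu_add_right: "nu q (p + p') = nu q p + nu q p'"
    and raP_nu: "raP p' (nu q p) = laP (mu p' q) p"
  using morita unfolding graded_morita_context_def unital_graded_bimod_def graded_ring_def
    graded_rmod_def graded_lmod_def by (elim conjE; metis)+

lemma GP_graded: "graded_group GP"
  using P_graded_lmod unfolding graded_lmod_def by blast

lemma hom_bact_nu_in_comp_image:
  assumes U: "graded_lmod GA GU sU" and GV: "graded_group GV"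
    and \<pi>: "graded_hom_deg GU GV sU sV 0 \<pi>" "surj \<pi>"
    and k: "k \<in> HOMs GP GV laP sV s" and p: "p \<in> GP \<beta>"
  shows "hom_bact raP (nu q p) k \<in> (\<circ>) \<pi> ` B_dot raP (HOM GP GU laP sU)"
proof -
  have GU: "graded_group GU" and sU: "lmod sU"
    and sU_deg: "\<And>a u \<alpha> \<beta>. a \<in> GA \<alpha> \<Longrightarrow> u \<in> GU \<beta> \<Longrightarrow> sU a u \<in> GU (\<alpha> + \<beta>)"
    using U unfolding graded_lmod_def by blast+
  have \<pi>_add: "additive \<pi>" and \<pi>_lin: "\<And>a u. \<pi> (sU a u) = sV a (\<pi> u)"
    and \<pi>_deg: "\<And>t u. u \<in> GU t \<Longrightarrow> \<pi> u \<in> GV t"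
    using \<pi>(1) unfolding graded_hom_deg_iff_lmod_hom lmod_hom_def by auto
  have k_lin: "\<And>a x. k (laP a x) = sV a (k x)" and "k p \<in> GV (\<beta> + s)"
    using k p unfolding HOMs_def graded_hom_deg_def by auto
  then obtain u where u: "u \<in> GU (\<beta> + s)" "\<pi> u = k p"
    using graded_surj_lift[OF GU GV \<pi>_add \<pi>_deg \<pi>(2)] by blast
  define G where "G q' = (\<lambda>x. sU (mu x q') u)" for q'
  have G_add: "additive G"
    using sU unfolding additive_def G_def lmod_def by (simp add: fun_eq_iff mu_add_right)
  have G_homs: "G q' \<in> HOMs GP GU laP sU (\<sigma> + (\<beta> + s))" if "q' \<in> GQ \<sigma>" for q' \<sigma>
    unfolding HOMs_def graded_hom_deg_def G_def
  proof (intro CollectI conjI allI ballI)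
    show "sU (mu (x + y) q') u = sU (mu x q') u + sU (mu y q') u" for x y
      using sU by (simp add: mu_add_left lmod_def)
    show "sU (mu (laP a x) q') u = sU a (sU (mu x q') u)" for a x
      using sU by (simp add: mu_laP lmod_def)
    show "sU (mu x q') u \<in> GU (t + (\<sigma> + (\<beta> + s)))" if "x \<in> GP t" for t x
      using sU_deg[OF mu_degree[OF that \<open>q' \<in> GQ \<sigma>\<close>] u(1)] by (simp add: add.assoc)
  qed
  have G_HOM: "G q' \<in> HOM GP GU laP sU" for q'
    unfolding HOM_def
    by (rule additive_fin_sums_into[OF G_add graded_group_fin_sums_homogeneous[OF GQ_graded]])
      (use G_homs in blast)
  have G_lbQ: "G (lbQ b q') = hom_bact raP b (G q')" for b q'
    by (simp add: G_def hom_bact_def mu_raP)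
  have "q \<in> fin_sums {lbQ b q' | b q'. True}"
    using Q_unital unfolding unital_lmod_def by simp
  then have "G q \<in> B_dot raP (HOM GP GU laP sU)"
    unfolding B_dot_def
    by (rule additive_fin_sums_into[OF G_add]) (use G_lbQ G_HOM in fastforce)
  moreover have "\<pi> \<circ> G q = hom_bact raP (nu q p) k"
    by (simp add: fun_eq_iff G_def hom_bact_def \<pi>_lin u(2) raP_nu k_lin)
  ultimately show ?thesis by (metis image_eqI)
qed

lemma comp_image_B_dot_HOM:
  assumes U: "graded_lmod GA GU sU" and GV: "graded_group GV"
    and \<pi>: "graded_hom_deg GU GV sU sV 0 \<pi>" "surj \<pi>"
    and nu_surj: "fin_sums {nu q p | q p. True} = UNIV"
  shows "(\<circ>) \<pi> ` B_dot raP (HOM GP GU laP sU) = B_dot raP (HOM GP GV laP sV)"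
proof
  show "(\<circ>) \<pi> ` B_dot raP (HOM GP GU laP sU) \<subseteq> B_dot raP (HOM GP GV laP sV)"
    by (rule comp_B_dot_HOM_subset[OF \<pi>(1)])
  have \<pi>_add: "additive ((\<circ>) \<pi>)"
    using \<pi>(1) by (intro additive_comp_left) (simp add: graded_hom_deg_iff_lmod_hom lmod_hom_def)
  define T where "T = (\<circ>) \<pi> ` {hom_bact raP b h | b h. h \<in> HOM GP GU laP sU}"
  have image_eq: "(\<circ>) \<pi> ` B_dot raP (HOM GP GU laP sU) = fin_sums T"
    unfolding B_dot_def T_def by (rule additive_image_fin_sums[OF \<pi>_add])
  have homog: "hom_bact raP b k \<in> fin_sums T" if k: "k \<in> HOMs GP GV laP sV s" for b k s
  proof -
    have k_add: "additive k" using k unfolding HOMs_def graded_hom_deg_iff_lmod_hom lmod_hom_def by blast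
    note scalar_add = additive_hom_bact_scalar[OF P_rmod k_add]
    have nu_add: "additive (\<lambda>p. hom_bact raP (nu q p) k)" for q
      by (simp add: additive_def nu_add_right additive.add[OF scalar_add])
    have nu_case: "hom_bact raP (nu q p) k \<in> fin_sums T" for q p
    proof (rule additive_fin_sums_into[OF nu_add graded_group_fin_sums_homogeneous[OF GP_graded]])
      fix p' assume "p' \<in> (\<Union>\<beta>. GP \<beta>)"
      then obtain \<beta> where "p' \<in> GP \<beta>" by blast
      then show "hom_bact raP (nu q p') k \<in> fin_sums T"
        unfolding image_eq[symmetric] by (rule hom_bact_nu_in_comp_image[OF U GV \<pi> k])
    qed
    have "b \<in> fin_sums {nu q p | q p. True}" using nu_surj by simp
    with scalar_add show ?thesis by (rule additive_fin_sums_into) (use nu_case in blast)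
  qed
  have "hom_bact raP b k \<in> fin_sums T" if "k \<in> HOM GP GV laP sV" for b k
    using additive_hom_bact that[unfolded HOM_def]
    by (rule additive_fin_sums_into) (use homog in blast)
  then have "{hom_bact raP b k | b k. k \<in> HOM GP GV laP sV} \<subseteq> fin_sums T" by blast
  then show "B_dot raP (HOM GP GV laP sV) \<subseteq> (\<circ>) \<pi> ` B_dot raP (HOM GP GU laP sU)"
    unfolding image_eq unfolding B_dot_def by (rule fin_sums_subset_fin_sums)
qed

lemma graded_B_iso_comp_quotient:
  assumes U: "graded_lmod GA GU sU" and GV: "graded_group GV"
    and quot: "graded_hom_deg GU GV sU sV 0 \<pi>" "surj \<pi>"
    and ker: "\<And>u. \<pi> u = 0 \<Longrightarrow> u \<in> torsion sU"
    and nu_surj: "fin_sums {nu q p | q p. True} = UNIV"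
  shows "graded_B_iso GP laP raP GU sU GV sV ((\<circ>) \<pi>)"
proof -
  let ?D1 = "B_dot raP (HOM GP GU laP sU)" and ?D2 = "B_dot raP (HOM GP GV laP sV)"
  have sU: "lmod sU" using U unfolding graded_lmod_def by blast
  have \<pi>_add: "additive \<pi>" using quot(1) by (simp add: graded_hom_deg_iff_lmod_hom lmod_hom_def)
  have lin: "lmod_hom laP sU f" if "f \<in> ?D1" for f
    by (rule lmod_hom_B_dot[OF sU P_rmod raP_laP that])
  show ?thesis
    unfolding graded_B_iso_def Let_def
  proof (intro conjI ballI allI)
    have "inj_on ((\<circ>) \<pi>) ?D1"
      using lmod_hom_eq_if_comp_eq[OF sU P_unital \<pi>_add ker lin lin] by (meson inj_onI)
    moreover have "(\<circ>) \<pi> ` ?D1 = ?D2" by (rule comp_image_B_dot_HOM[OF U GV quot nu_surj])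
    ultimately show "bij_betw ((\<circ>) \<pi>) ?D1 ?D2" unfolding bij_betw_def ..
    show "\<pi> \<circ> (f + g) = (\<pi> \<circ> f) + (\<pi> \<circ> g)" for f g
      by (rule additive.add[OF additive_comp_left[OF \<pi>_add]])
    show "\<pi> \<circ> hom_bact raP b f = hom_bact raP b (\<pi> \<circ> f)" for b f
      by (simp add: hom_bact_def comp_def)
    show "f \<in> HOMs GP GU laP sU s \<longleftrightarrow> \<pi> \<circ> f \<in> HOMs GP GV laP sV s" if "f \<in> ?D1" for f s
      using comp_HOMs[OF quot(1)]
        graded_hom_deg_if_comp[OF GA_graded P_graded_lmod P_unital U GV quot(1) ker lin[OF that]]
      unfolding HOMs_def by blast
  qed
qed

end

theorem corollary5p5:
  fixes GA :: "'g::group_add \<Rightarrow> 'a::ring set" and GB :: "'g \<Rightarrow> 'b::ring set"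
    and GP :: "'g \<Rightarrow> 'p::ab_group_add set" and GQ :: "'g \<Rightarrow> 'q::ab_group_add set"
    and laP :: "'a \<Rightarrow> 'p \<Rightarrow> 'p" and raP :: "'p \<Rightarrow> 'b \<Rightarrow> 'p"
    and lbQ :: "'b \<Rightarrow> 'q \<Rightarrow> 'q" and raQ :: "'q \<Rightarrow> 'a \<Rightarrow> 'q"
    and mu :: "'p \<Rightarrow> 'q \<Rightarrow> 'a" and nu :: "'q \<Rightarrow> 'p \<Rightarrow> 'b"
    and GU :: "'g \<Rightarrow> 'u::ab_group_add set" and sU :: "'a \<Rightarrow> 'u \<Rightarrow> 'u"
    and GV :: "'g \<Rightarrow> 'v::ab_group_add set" and sV :: "'a \<Rightarrow> 'v \<Rightarrow> 'v"
    and \<pi> :: "'u \<Rightarrow> 'v"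
  assumes ctx: "graded_morita_context GA GB GP GQ laP raP lbQ raQ mu nu"
    and mu_surj: "fin_sums {mu p q | p q. True} = UNIV"
    and nu_surj: "fin_sums {nu q p | q p. True} = UNIV"
    and U: "graded_lmod GA GU sU" "unital_lmod sU"
    and V: "graded_lmod GA GV sV"
    and quot: "graded_hom_deg GU GV sU sV 0 \<pi>" "surj \<pi>" "\<forall>u. \<pi> u = 0 \<longleftrightarrow> u \<in> torsion sU"
  shows "\<exists>\<phi>. graded_B_iso GP laP raP GU sU GV sV \<phi>"
proof -
  interpret graded_morita GA GB GP GQ laP raP lbQ raQ mu nu by (rule graded_morita.intro[OF ctx])
  have "graded_B_iso GP laP raP GU sU GV sV ((\<circ>) \<pi>)"
    using V quot(3) unfolding graded_lmod_def
    by (intro graded_B_iso_comp_quotient[OF U(1) _ quot(1,2) _ nu_surj]) blast+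
  then show ?thesis by blast
qed

end
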